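(* Let $\mathcal A=\{\ell_1,\dots,\ell_n\}$ be an arrangement of affine lines in $\mathbb C^2$, and let $\langle\beta_1,\dots,\beta_n\mid R_1,\dots,R_\nu\rangle$ be a finite presentation of $\pi_1(M(\mathcal A))$ in which $\beta_i$ is an elementary loop around $\ell_i$. Let $N\subset F_n$ be the normal closure of $R_1,\dots,R_\nu$ in the free group $F_n$ on $\beta_1,\dots,\beta_n$. Then the following are equivalent: (a) the $\mathbb Z[t^{\pm1}]$-submodule of $\mathbb Z[t^{\pm1}]^n$ generated by the vectors $v_j=\big((\partial R_j/\partial\beta_1)^\varphi,\dots,(\partial R_j/\partial\beta_n)^\varphi\big)$, $j=1,\dots,\nu$, equals $(1-t)\{x\in\mathbb Z[t^{\pm1}]^n:\sum_i x_i=0\}$; (b) $[F_n,F_n]=N\,[\ker\varphi,\ker\varphi]$. Equivalently, $\pi_1(M(\mathcal A))$ is abelian modulo the image of $[\ker\varphi,\ker\varphi]$.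
   Context: $M(\mathcal A)=\mathbb C^2\setminus\bigcup\ell_i$. $\varphi:F_n\to\langle t\rangle\cong\mathbb Z$ is the length homomorphism with $\varphi(\beta_i)=t$ for all $i$; it extends to a ring homomorphism $\mathbb Z[F_n]\to\mathbb Z[t^{\pm1}]$, and for $u\in\mathbb Z[F_n]$ we write $u^\varphi$ for its image. $\partial/\partial\beta_i:\mathbb Z[F_n]\to\mathbb Z[F_n]$ are the Fox free derivatives. Commutators are $[a,b]=aba^{-1}b^{-1}$. (Condition (a) is what the paper calls "$\mathcal A$ is a-monodromic over $\mathbb Z$".) *)

theory Defs
  imports "HOL-Algebra.Algebra" "HOL-Library.Poly_Mapping"
begin

text \<open>A letter (True, i) stands for beta_i, a letter (False, i) for the inverse of beta_i.
  Elements of F_n are freely reduced words in these letters.\<close>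

type_synonym letter = "bool \<times> nat"
type_synonym word = "letter list"

fun inv_letter :: "letter \<Rightarrow> letter" where
  "inv_letter (b, i) = (\<not> b, i)"

fun reduced :: "word \<Rightarrow> bool" where
  "reduced [] = True"
| "reduced [a] = True"
| "reduced (a # b # w) = (b \<noteq> inv_letter a \<and> reduced (b # w))"

fun cancel1 :: "letter \<Rightarrow> word \<Rightarrow> word" where
  "cancel1 a [] = [a]"
| "cancel1 a (b # w) = (if b = inv_letter a then w else a # b # w)"

definition reduce :: "word \<Rightarrow> word" where
  "reduce w = foldr cancel1 w []"

definition free_group :: "nat \<Rightarrow> word monoid" where
  "free_group n = \<lparr> carrier = {w. reduced w \<and> (\<forall>a \<in> set w. snd a < n)},
                   monoid.mult = (\<lambda>u v. reduce (u @ v)),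
                   monoid.one = [] \<rparr>"

section \<open>The length homomorphism phi : F_n -> <t> = Z (exponent sum)\<close>

fun letter_exp :: "letter \<Rightarrow> int" where
  "letter_exp (b, i) = (if b then 1 else -1)"

definition exp_sum :: "word \<Rightarrow> int" where
  "exp_sum w = sum_list (map letter_exp w)"

definition ker_phi :: "nat \<Rightarrow> word set" where
  "ker_phi n = {w \<in> carrier (free_group n). exp_sum w = 0}"

section \<open>Laurent polynomials Z[t, t^-1] as the group ring Z[Z]\<close>

type_synonym laurent = "int \<Rightarrow>\<^sub>0 int"

definition tpow :: "int \<Rightarrow> laurent" where
  "tpow k = Poly_Mapping.single k 1"

text \<open>fox_phi i w is (dw/d beta_i)^phi, computed by the Fox rules
  d(uv) = du + u dv,  d beta_j / d beta_i = delta_ij,  d beta_j^-1 / d beta_i = - delta_ij beta_j^-1,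
  and then applying the ring homomorphism Z[F_n] -> Z[t,t^-1] induced by phi.\<close>
fun fox_phi :: "nat \<Rightarrow> word \<Rightarrow> laurent" where
  "fox_phi i [] = 0"
| "fox_phi i ((b, j) # w) =
     (if j = i then (if b then 1 else - tpow (-1)) else 0)
     + tpow (letter_exp (b, j)) * fox_phi i w"

definition normal_closure :: "('a, 'b) monoid_scheme \<Rightarrow> 'a set \<Rightarrow> 'a set" where
  "normal_closure G S = generate G {g \<otimes>\<^bsub>G\<^esub> s \<otimes>\<^bsub>G\<^esub> inv\<^bsub>G\<^esub> g | g s. g \<in> carrier G \<and> s \<in> S}"

definition fox_module :: "nat \<Rightarrow> nat \<Rightarrow> (nat \<Rightarrow> word) \<Rightarrow> (nat \<Rightarrow> laurent) set" where
  "fox_module n \<nu> R =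
     {(\<lambda>i. if i < n then (\<Sum>j<\<nu>. c j * fox_phi i (R j)) else 0) | c. True}"

definition target_module :: "nat \<Rightarrow> (nat \<Rightarrow> laurent) set" where
  "target_module n =
     {(\<lambda>i. if i < n then (1 - tpow 1) * x i else 0) | x. (\<Sum>i<n. x i) = 0}"

end

theory Submission
  imports Defs
begin

text \<open>Restricted to \<open>K = ker \<phi>\<close>, the Fox vector \<open>w \<mapsto> ((\<partial>w/\<partial>\<beta>\<^sub>i)\<^sup>\<phi>)\<^sub>i\<close> is a homomorphism
  into \<open>\<int>[t, t\<^sup>-\<^sup>1]\<^sup>n\<close> turning conjugation by \<open>g\<close> into multiplication by \<open>t\<^sup>\<phi>\<^sup>(\<^sup>g\<^sup>)\<close>, and its
  kernel is exactly \<open>[K, K]\<close>: a left inverse \<open>\<int>[t, t\<^sup>-\<^sup>1]\<^sup>n \<rightarrow> K/[K, K]\<close> sends \<open>t\<^sup>k e\<^sub>i\<close> to the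
  Reidemeister-Schreier generator \<open>\<beta>\<^sub>0\<^sup>k \<beta>\<^sub>i \<beta>\<^sub>0\<^sup>-\<^sup>k\<^sup>-\<^sup>1\<close>. By the fundamental formula of Fox
  calculus and the commutators \<open>[\<beta>\<^sub>0, \<beta>\<^sub>i]\<close>, the image of \<open>[F\<^sub>n, F\<^sub>n]\<close> is
  \<open>(1 - t){x. \<Sum>\<^sub>i x\<^sub>i = 0}\<close>, while the image of \<open>N\<close> is the module spanned by the \<open>v\<^sub>j\<close>.
  Hence (a) says that \<open>[F\<^sub>n, F\<^sub>n]\<close> and \<open>N\<close> have the same image, i.e. \<open>[F\<^sub>n, F\<^sub>n] = N [K, K]\<close>.
  The last equivalence holds in any group: \<open>G/M\<close> is abelian iff \<open>[G, G] \<subseteq> M\<close>.\<close>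

section \<open>Free reduction and the free group\<close>

lemma inv_letter_inv_letter [simp]: "inv_letter (inv_letter a) = a"
  by (cases a) auto

lemma reduced_ConsD: "reduced (b # w) \<Longrightarrow> reduced w"
  by (cases w) auto

lemma reduced_cancel1: "reduced w \<Longrightarrow> reduced (cancel1 a w)"
  by (cases w) (auto dest: reduced_ConsD)

lemma reduce_Nil [simp]: "reduce [] = []"
  by (simp add: reduce_def)

lemma reduce_Cons: "reduce (a # w) = cancel1 a (reduce w)"
  by (simp add: reduce_def)

lemma reduce_append: "reduce (u @ v) = foldr cancel1 u (reduce v)"
  by (simp add: reduce_def)

lemma reduced_reduce: "reduced (reduce w)"
  by (induction w) (auto simp: reduce_Cons reduced_cancel1)

lemma reduce_reduced: "reduced w \<Longrightarrow> reduce w = w"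
proof (induction w)
  case (Cons a w)
  then have "reduce w = w"
    using reduced_ConsD by blast
  then show ?case
    using Cons.prems by (cases w) (auto simp: reduce_Cons)
qed simp

lemma cancel1_cancel1_inv_letter: "reduced w \<Longrightarrow> cancel1 a (cancel1 (inv_letter a) w) = w"
  by (cases w rule: reduced.cases) auto

lemma reduce_append_reduce_right: "reduce (u @ reduce v) = reduce (u @ v)"
  by (simp add: reduce_append reduce_reduced reduced_reduce)

lemma reduce_cancel1_append:
  assumes "reduced r"
  shows "reduce (cancel1 a r @ v) = cancel1 a (reduce (r @ v))"
proof (cases r)
  case (Cons b r')
  then show ?thesis
    using cancel1_cancel1_inv_letter[OF reduced_reduce, of a "r' @ v"]
    by (auto simp: reduce_Cons)
qed (simp add: reduce_Cons)

lemma reduce_append_reduce_left: "reduce (reduce u @ v) = reduce (u @ v)"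
  by (induction u arbitrary: v) (simp_all add: reduce_Cons reduce_cancel1_append reduced_reduce)

lemma set_reduce_subset: "set (reduce w) \<subseteq> set w"
proof (induction w)
  case (Cons a w)
  have "set (cancel1 a x) \<subseteq> insert a (set x)" for x
    by (cases x) auto
  then show ?case
    using Cons by (fastforce simp: reduce_Cons)
qed simp

definition word_inv :: "word \<Rightarrow> word" where
  "word_inv w = rev (map inv_letter w)"

lemma reduce_word_inv_append: "reduce (word_inv w @ w) = []"
proof (induction w)
  case (Cons a w)
  have "reduce (word_inv (a # w) @ a # w)
      = foldr cancel1 (word_inv w) (cancel1 (inv_letter a) (cancel1 a (reduce w)))"
    by (simp add: word_inv_def reduce_append reduce_Cons)
  also have "\<dots> = reduce (word_inv w @ w)"
    using cancel1_cancel1_inv_letter[OF reduced_reduce, of "inv_letter a" w]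
    by (simp add: reduce_append)
  finally show ?case
    using Cons by simp
qed (simp add: word_inv_def)

lemma carrier_free_group: "carrier (free_group n) = {w. reduced w \<and> (\<forall>a \<in> set w. snd a < n)}"
  by (simp add: free_group_def)

lemma mult_free_group: "u \<otimes>\<^bsub>free_group n\<^esub> v = reduce (u @ v)"
  by (simp add: free_group_def)

lemma one_free_group: "\<one>\<^bsub>free_group n\<^esub> = []"
  by (simp add: free_group_def)

lemma reduce_in_carrier_free_group:
  "\<forall>a \<in> set w. snd a < n \<Longrightarrow> reduce w \<in> carrier (free_group n)"
  using set_reduce_subset[of w] by (auto simp: carrier_free_group reduced_reduce)

lemma group_free_group: "group (free_group n)"
proof (rule groupI)
  fix x y
  assume "x \<in> carrier (free_group n)" "y \<in> carrier (free_group n)"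
  then show "x \<otimes>\<^bsub>free_group n\<^esub> y \<in> carrier (free_group n)"
    using set_reduce_subset[of "x @ y"] by (auto simp: carrier_free_group mult_free_group reduced_reduce)
next
  fix x
  assume x: "x \<in> carrier (free_group n)"
  then show "\<one>\<^bsub>free_group n\<^esub> \<otimes>\<^bsub>free_group n\<^esub> x = x"
    by (simp add: carrier_free_group mult_free_group one_free_group reduce_reduced)
  have "reduce (word_inv x) \<in> carrier (free_group n)"
    using x by (intro reduce_in_carrier_free_group) (auto simp: carrier_free_group word_inv_def)
  moreover have "reduce (word_inv x) \<otimes>\<^bsub>free_group n\<^esub> x = \<one>\<^bsub>free_group n\<^esub>"
    by (simp add: mult_free_group one_free_group reduce_append_reduce_left reduce_word_inv_append)
  ultimately show "\<exists>y \<in> carrier (free_group n). y \<otimes>\<^bsub>free_group n\<^esub> x = \<one>\<^bsub>free_group n\<^esub>"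
    by blast
qed (simp_all add: carrier_free_group one_free_group mult_free_group
       reduce_append_reduce_left reduce_append_reduce_right)

section \<open>Exponent sums and Fox derivatives of words\<close>

lemma tpow_add: "tpow (a + b) = tpow a * tpow b"
  by (simp add: tpow_def mult_single)

lemma tpow_0 [simp]: "tpow 0 = 1"
  by (simp add: tpow_def)

lemma tpow_mult_tpow_uminus: "tpow a * tpow (- a) = 1"
  by (simp flip: tpow_add)

lemma letter_exp_inv_letter [simp]: "letter_exp (inv_letter a) = - letter_exp a"
  by (cases a) auto

lemma exp_sum_Nil [simp]: "exp_sum [] = 0"
  by (simp add: exp_sum_def)

lemma exp_sum_Cons [simp]: "exp_sum (a # w) = letter_exp a + exp_sum w"
  by (simp add: exp_sum_def)

lemma exp_sum_append: "exp_sum (u @ v) = exp_sum u + exp_sum v"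
  by (simp add: exp_sum_def)

lemma exp_sum_reduce: "exp_sum (reduce w) = exp_sum w"
proof (induction w)
  case (Cons a w)
  have "exp_sum (cancel1 a x) = exp_sum (a # x)" for x
    by (cases x) auto
  then show ?case
    using Cons by (simp add: reduce_Cons)
qed simp

lemma fox_phi_append: "fox_phi i (u @ v) = fox_phi i u + tpow (exp_sum u) * fox_phi i v"
  by (induction u) (auto simp: algebra_simps tpow_add)

lemma fox_phi_cancel1: "fox_phi i (cancel1 a w) = fox_phi i (a # w)"
proof -
  have "fox_phi i (a # inv_letter a # x) = fox_phi i x" for x
    by (cases a) (auto simp: algebra_simps simp flip: tpow_add)
  then show ?thesis
    by (cases w) auto
qed

lemma fox_phi_reduce: "fox_phi i (reduce w) = fox_phi i w"
proof (induction w)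
  case (Cons a w)
  then show ?case
    by (cases a) (simp add: reduce_Cons fox_phi_cancel1)
qed simp

section \<open>Geometric series in \<open>\<int>[t, t\<^sup>-\<^sup>1]\<close>\<close>

definition geom_sum :: "int \<Rightarrow> laurent" where
  "geom_sum k = (if 0 \<le> k then (\<Sum>m<nat k. tpow (int m))
                 else - (\<Sum>m<nat (- k). tpow (- int m - 1)))"

lemma one_minus_t_neq_0: "(1 - tpow 1 :: laurent) \<noteq> 0"
proof
  assume "(1 - tpow 1 :: laurent) = 0"
  moreover have "Poly_Mapping.lookup (1 - tpow 1 :: laurent) 0 = 1"
    by (simp add: lookup_minus lookup_one tpow_def lookup_single)
  ultimately show False
    by simp
qed

lemma one_minus_t_mult_geom_sum: "(1 - tpow 1) * geom_sum k = 1 - tpow k"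
proof -
  have pos: "(1 - tpow 1) * (\<Sum>m<N. tpow (int m)) = 1 - tpow (int N)" for N
  proof (induction N)
    case (Suc N)
    have "(1 - tpow 1) * (\<Sum>m<Suc N. tpow (int m))
        = (1 - tpow 1) * (\<Sum>m<N. tpow (int m)) + (1 - tpow 1) * tpow (int N)"
      by (simp add: algebra_simps)
    also have "\<dots> = 1 - tpow 1 * tpow (int N)"
      by (simp only: Suc) (simp add: algebra_simps)
    also have "tpow 1 * tpow (int N) = tpow (int (Suc N))"
      by (simp flip: tpow_add)
    finally show ?case .
  qed simp
  have neg: "(1 - tpow 1) * (\<Sum>m<N. tpow (- int m - 1)) = tpow (- int N) - 1" for N
  proof (induction N)
    case (Suc N)
    have "(1 - tpow 1) * (\<Sum>m<Suc N. tpow (- int m - 1))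
        = (1 - tpow 1) * (\<Sum>m<N. tpow (- int m - 1)) + (1 - tpow 1) * tpow (- int N - 1)"
      by (simp add: algebra_simps)
    also have "\<dots> = tpow (- int N - 1) - 1 + (tpow (- int N) - tpow 1 * tpow (- int N - 1))"
      by (simp only: Suc) (simp add: algebra_simps)
    also have "tpow 1 * tpow (- int N - 1) = tpow (- int N)"
      by (simp flip: tpow_add)
    also have "- int N - 1 = - int (Suc N)"
      by simp
    finally show ?case
      by simp
  qed simp
  show ?thesis
    using pos[of "nat k"] neg[of "nat (- k)"] by (simp add: geom_sum_def)
qed

lemma geom_sum_unique: "(1 - tpow 1) * x = 1 - tpow k \<Longrightarrow> x = geom_sum k"
  using one_minus_t_mult_geom_sum[of k] one_minus_t_neq_0 by (metis mult_left_cancel)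

lemma geom_sum_add: "geom_sum (a + b) = geom_sum a + tpow a * geom_sum b"
proof (rule sym, rule geom_sum_unique)
  have "(1 - tpow 1) * (geom_sum a + tpow a * geom_sum b)
      = (1 - tpow 1) * geom_sum a + tpow a * ((1 - tpow 1) * geom_sum b)"
    by (simp add: algebra_simps)
  also have "\<dots> = 1 - tpow a + tpow a * (1 - tpow b)"
    by (simp only: one_minus_t_mult_geom_sum)
  finally show "(1 - tpow 1) * (geom_sum a + tpow a * geom_sum b) = 1 - tpow (a + b)"
    by (simp add: algebra_simps tpow_add)
qed

text \<open>The fundamental formula of Fox calculus pushed forward along \<open>\<phi>\<close>:
  \<open>(1 - t) \<Sum>\<^sub>i (\<partial>w/\<partial>\<beta>\<^sub>i)\<^sup>\<phi> = 1 - t\<^sup>\<phi>\<^sup>(\<^sup>w\<^sup>)\<close>.\<close>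
lemma sum_fox_phi:
  assumes "\<forall>a \<in> set w. snd a < n"
  shows "(\<Sum>i<n. fox_phi i w) = geom_sum (exp_sum w)"
  using assms
proof (induction w)
  case Nil
  show ?case
    using geom_sum_unique[of 0 0] by simp
next
  case (Cons a w)
  obtain b j where a: "a = (b, j)" and j: "j < n"
    using Cons.prems by (cases a) auto
  have "geom_sum 1 = 1" "geom_sum (- 1) = - tpow (- 1)"
    by (rule sym, rule geom_sum_unique, simp add: algebra_simps flip: tpow_add)+
  then have "(if b then 1 else - tpow (- 1)) = geom_sum (letter_exp a)"
    by (simp add: a)
  then show ?case
    using Cons j geom_sum_add[of "letter_exp a" "exp_sum w"]
    by (simp add: a sum.distrib flip: sum_distrib_left)
qed

section \<open>Submodules of \<open>\<int>[t, t\<^sup>-\<^sup>1]\<^sup>n\<close>\<close>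

text \<open>Closure under multiplication by the monomials \<open>t\<^sup>k\<close> already gives closure under all
  scalars, see \<open>laurent_submodule_smult\<close>.\<close>
definition laurent_submodule :: "(nat \<Rightarrow> laurent) set \<Rightarrow> bool" where
  "laurent_submodule S \<longleftrightarrow> (\<lambda>i. 0) \<in> S \<and> (\<forall>x \<in> S. \<forall>y \<in> S. (\<lambda>i. x i + y i) \<in> S)
     \<and> (\<forall>x \<in> S. (\<lambda>i. - x i) \<in> S) \<and> (\<forall>x \<in> S. \<forall>k. (\<lambda>i. tpow k * x i) \<in> S)"

lemma laurent_submoduleI:
  assumes "(\<lambda>i. 0) \<in> S"
    and "\<And>x y. x \<in> S \<Longrightarrow> y \<in> S \<Longrightarrow> (\<lambda>i. x i + y i) \<in> S"
    and "\<And>x. x \<in> S \<Longrightarrow> (\<lambda>i. - x i) \<in> S"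
    and "\<And>x k. x \<in> S \<Longrightarrow> (\<lambda>i. tpow k * x i) \<in> S"
  shows "laurent_submodule S"
  using assms by (auto simp: laurent_submodule_def)

context
  fixes S
  assumes S: "laurent_submodule S"
begin

lemma laurent_submodule_zero: "(\<lambda>i. 0) \<in> S"
  using S by (simp add: laurent_submodule_def)

lemma laurent_submodule_add: "x \<in> S \<Longrightarrow> y \<in> S \<Longrightarrow> (\<lambda>i. x i + y i) \<in> S"
  using S by (simp add: laurent_submodule_def)

lemma laurent_submodule_uminus: "x \<in> S \<Longrightarrow> (\<lambda>i. - x i) \<in> S"
  using S by (simp add: laurent_submodule_def)

lemma laurent_submodule_tpow: "x \<in> S \<Longrightarrow> (\<lambda>i. tpow k * x i) \<in> S"
  using S by (simp add: laurent_submodule_def)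

lemma laurent_submodule_of_int:
  assumes x: "x \<in> S"
  shows "(\<lambda>i. of_int m * x i) \<in> S"
proof (induction m rule: int_induct[where k = 0])
  case base
  then show ?case
    using laurent_submodule_zero by simp
next
  case (step1 m)
  then show ?case
    using laurent_submodule_add[OF step1(2) x] by (simp add: algebra_simps)
next
  case (step2 m)
  then show ?case
    using laurent_submodule_add[OF step2(2) laurent_submodule_uminus[OF x]]
    by (simp add: algebra_simps)
qed

lemma laurent_submodule_smult:
  assumes x: "x \<in> S"
  shows "(\<lambda>i. c * x i) \<in> S"
proof (induction c rule: Poly_Mapping.update_induct)
  case const
  then show ?case
    using laurent_submodule_zero by simp
next
  case (update f a b)
  have "Poly_Mapping.update a b f = f + Poly_Mapping.single a b"
    using update(1)
    by (intro poly_mapping_eqI)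
       (auto simp: lookup_update lookup_add lookup_single when_def not_in_keys_iff_lookup_eq_zero)
  also have "Poly_Mapping.single a b = of_int b * tpow a"
    by (simp add: tpow_def mult_single flip: single_of_int)
  finally have "Poly_Mapping.update a b f = f + of_int b * tpow a" .
  then show ?case
    using laurent_submodule_add[OF update(3) laurent_submodule_of_int[OF laurent_submodule_tpow[OF x]]]
    by (simp add: algebra_simps)
qed

lemma laurent_submodule_sum:
  assumes "finite J" and "\<And>j. j \<in> J \<Longrightarrow> v j \<in> S"
  shows "(\<lambda>i. \<Sum>j\<in>J. v j i) \<in> S"
  using assms
  by (induction J rule: finite_induct) (simp_all add: laurent_submodule_zero laurent_submodule_add)

end

lemma laurent_submodule_fox_module: "laurent_submodule (fox_module n \<nu> R)"
proof (rule laurent_submoduleI)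
  show "(\<lambda>i. 0) \<in> fox_module n \<nu> R"
    by (auto simp: fox_module_def intro!: exI[of _ "\<lambda>j. 0"])
next
  fix x y
  assume "x \<in> fox_module n \<nu> R" "y \<in> fox_module n \<nu> R"
  then obtain c d where "x = (\<lambda>i. if i < n then (\<Sum>j<\<nu>. c j * fox_phi i (R j)) else 0)"
    and "y = (\<lambda>i. if i < n then (\<Sum>j<\<nu>. d j * fox_phi i (R j)) else 0)"
    by (auto simp: fox_module_def)
  then show "(\<lambda>i. x i + y i) \<in> fox_module n \<nu> R"
    by (auto simp: fox_module_def fun_eq_iff sum.distrib algebra_simps
        intro!: exI[of _ "\<lambda>j. c j + d j"])
next
  fix x
  assume "x \<in> fox_module n \<nu> R"
  then obtain c where "x = (\<lambda>i. if i < n then (\<Sum>j<\<nu>. c j * fox_phi i (R j)) else 0)"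
    by (auto simp: fox_module_def)
  then show "(\<lambda>i. - x i) \<in> fox_module n \<nu> R"
    by (auto simp: fox_module_def fun_eq_iff sum_negf intro!: exI[of _ "\<lambda>j. - c j"])
next
  fix x k
  assume "x \<in> fox_module n \<nu> R"
  then obtain c where "x = (\<lambda>i. if i < n then (\<Sum>j<\<nu>. c j * fox_phi i (R j)) else 0)"
    by (auto simp: fox_module_def)
  then show "(\<lambda>i. tpow k * x i) \<in> fox_module n \<nu> R"
    by (auto simp: fox_module_def fun_eq_iff sum_distrib_left algebra_simps
        intro!: exI[of _ "\<lambda>j. tpow k * c j"])
qed

lemma fox_module_subset:
  assumes S: "laurent_submodule S"
    and gen: "\<And>j. j < \<nu> \<Longrightarrow> (\<lambda>i. if i < n then fox_phi i (R j) else 0) \<in> S"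
  shows "fox_module n \<nu> R \<subseteq> S"
proof
  fix x
  assume "x \<in> fox_module n \<nu> R"
  then obtain c where "x = (\<lambda>i. if i < n then (\<Sum>j<\<nu>. c j * fox_phi i (R j)) else 0)"
    by (auto simp: fox_module_def)
  then have "x = (\<lambda>i. \<Sum>j<\<nu>. c j * (if i < n then fox_phi i (R j) else 0))"
    by (auto simp: fun_eq_iff)
  also have "\<dots> \<in> S"
    by (intro laurent_submodule_sum[OF S] laurent_submodule_smult[OF S] gen) auto
  finally show "x \<in> S" .
qed

lemma fox_module_generator:
  assumes "j < \<nu>"
  shows "(\<lambda>i. if i < n then fox_phi i (R j) else 0) \<in> fox_module n \<nu> R"
proof -
  have "fox_phi i (R j) = (\<Sum>j'<\<nu>. (if j' = j then 1 else 0) * fox_phi i (R j'))" for i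
    using assms by (simp add: if_distrib[of "\<lambda>c. c * _"] cong: if_cong)
  then show ?thesis
    by (auto simp: fox_module_def fun_eq_iff intro!: exI[of _ "\<lambda>j'. if j' = j then 1 else 0"])
qed

lemma target_module_iff:
  "x \<in> target_module n \<longleftrightarrow>
     (\<exists>y. (\<Sum>i<n. y i) = 0 \<and> x = (\<lambda>i. if i < n then (1 - tpow 1) * y i else 0))"
  by (auto simp: target_module_def)

lemma laurent_submodule_target_module: "laurent_submodule (target_module n)"
proof (rule laurent_submoduleI)
  show "(\<lambda>i. 0) \<in> target_module n"
    unfolding target_module_iff by (auto intro!: exI[of _ "\<lambda>i. 0"])
next
  fix x y
  assume "x \<in> target_module n" "y \<in> target_module n"
  then obtain u v where "(\<Sum>i<n. u i) = 0" "x = (\<lambda>i. if i < n then (1 - tpow 1) * u i else 0)"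
    and "(\<Sum>i<n. v i) = 0" "y = (\<lambda>i. if i < n then (1 - tpow 1) * v i else 0)"
    unfolding target_module_iff by blast
  then show "(\<lambda>i. x i + y i) \<in> target_module n"
    unfolding target_module_iff
    by (intro exI[of _ "\<lambda>i. u i + v i"]) (simp add: sum.distrib fun_eq_iff algebra_simps)
next
  fix x
  assume "x \<in> target_module n"
  then obtain u where "(\<Sum>i<n. u i) = 0" "x = (\<lambda>i. if i < n then (1 - tpow 1) * u i else 0)"
    unfolding target_module_iff by blast
  then show "(\<lambda>i. - x i) \<in> target_module n"
    unfolding target_module_iff
    by (intro exI[of _ "\<lambda>i. - u i"]) (simp add: sum_negf fun_eq_iff)
next
  fix x k
  assume "x \<in> target_module n"
  then obtain u where "(\<Sum>i<n. u i) = 0" "x = (\<lambda>i. if i < n then (1 - tpow 1) * u i else 0)"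
    unfolding target_module_iff by blast
  then show "(\<lambda>i. tpow k * x i) \<in> target_module n"
    unfolding target_module_iff
    by (intro exI[of _ "\<lambda>i. tpow k * u i"]) (simp add: sum_distrib_left[symmetric] fun_eq_iff algebra_simps)
qed

section \<open>Evaluating Laurent polynomials in abelian groups\<close>

definition eval_laurent :: "('q, 'b) monoid_scheme \<Rightarrow> (int \<Rightarrow> 'q) \<Rightarrow> laurent \<Rightarrow> 'q" where
  "eval_laurent Q f c = finprod Q (\<lambda>k. f k [^]\<^bsub>Q\<^esub> Poly_Mapping.lookup c k) (Poly_Mapping.keys c)"

definition eval_laurent_vec ::
    "('q, 'b) monoid_scheme \<Rightarrow> (nat \<Rightarrow> int \<Rightarrow> 'q) \<Rightarrow> nat set \<Rightarrow> (nat \<Rightarrow> laurent) \<Rightarrow> 'q" where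
  "eval_laurent_vec Q f I x = finprod Q (\<lambda>i. eval_laurent Q (f i) (x i)) I"

context comm_group
begin

lemma eval_laurent_closed: "(\<And>k. f k \<in> carrier G) \<Longrightarrow> eval_laurent G f c \<in> carrier G"
  unfolding eval_laurent_def by (rule finprod_closed) auto

lemma eval_laurent_zero [simp]: "eval_laurent G f 0 = \<one>"
  by (simp add: eval_laurent_def)

lemma eval_laurent_tpow: "(\<And>k. f k \<in> carrier G) \<Longrightarrow> eval_laurent G f (tpow k) = f k"
  by (simp add: eval_laurent_def tpow_def)

lemma eval_laurent_add:
  assumes f: "\<And>k. f k \<in> carrier G"
  shows "eval_laurent G f (c + d) = eval_laurent G f c \<otimes> eval_laurent G f d"
proof -
  let ?S = "Poly_Mapping.keys c \<union> Poly_Mapping.keys d \<union> Poly_Mapping.keys (c + d)"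
  have on_S: "eval_laurent G f e = (\<Otimes>k\<in>?S. f k [^] Poly_Mapping.lookup e k)"
    if "Poly_Mapping.keys e \<subseteq> ?S" for e
    unfolding eval_laurent_def using that
    by (intro finprod_mono_neutral_cong_left) (auto simp: f not_in_keys_iff_lookup_eq_zero)
  have "eval_laurent G f (c + d)
      = (\<Otimes>k\<in>?S. f k [^] Poly_Mapping.lookup c k \<otimes> f k [^] Poly_Mapping.lookup d k)"
    by (simp add: on_S lookup_add int_pow_mult f)
  also have "\<dots> = (\<Otimes>k\<in>?S. f k [^] Poly_Mapping.lookup c k) \<otimes> (\<Otimes>k\<in>?S. f k [^] Poly_Mapping.lookup d k)"
    by (rule finprod_multf) (auto simp: f)
  also have "\<dots> = eval_laurent G f c \<otimes> eval_laurent G f d"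
    by (simp only: on_S[of c] on_S[of d] Un_upper1 Un_upper2 le_supI1)
  finally show ?thesis .
qed

lemma eval_laurent_uminus:
  assumes f: "\<And>k. f k \<in> carrier G"
  shows "eval_laurent G f (- c) = inv (eval_laurent G f c)"
proof -
  have "eval_laurent G f (- c) \<otimes> eval_laurent G f c = \<one>"
    using eval_laurent_add[OF f, where c = "- c" and d = c] by simp
  then show ?thesis
    using eval_laurent_closed[OF f] by (simp add: inv_equality)
qed

lemma eval_laurent_vec_zero: "eval_laurent_vec G f I (\<lambda>i. 0) = \<one>"
  by (simp add: eval_laurent_vec_def)

context
  fixes f :: "nat \<Rightarrow> int \<Rightarrow> 'a" and I :: "nat set"
  assumes f: "\<And>i k. i \<in> I \<Longrightarrow> f i k \<in> carrier G"
begin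

lemma eval_laurent_vec_add:
  "eval_laurent_vec G f I (\<lambda>i. x i + y i) = eval_laurent_vec G f I x \<otimes> eval_laurent_vec G f I y"
proof -
  have "eval_laurent_vec G f I (\<lambda>i. x i + y i)
      = (\<Otimes>i\<in>I. eval_laurent G (f i) (x i) \<otimes> eval_laurent G (f i) (y i))"
    unfolding eval_laurent_vec_def by (rule finprod_cong') (auto simp: f eval_laurent_add eval_laurent_closed)
  then show ?thesis
    unfolding eval_laurent_vec_def by (simp add: finprod_multf f eval_laurent_closed)
qed

lemma eval_laurent_vec_cong:
  "(\<And>i. i \<in> I \<Longrightarrow> x i = y i) \<Longrightarrow> eval_laurent_vec G f I x = eval_laurent_vec G f I y"
  unfolding eval_laurent_vec_def by (rule finprod_cong') (auto simp: f eval_laurent_closed)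

lemma eval_laurent_vec_single:
  assumes "finite I"
  shows "eval_laurent_vec G f I (\<lambda>i. if i = j then c else 0)
    = (if j \<in> I then eval_laurent G (f j) c else \<one>)"
proof -
  have "eval_laurent_vec G f I (\<lambda>i. if i = j then c else 0)
      = (\<Otimes>i\<in>I. if j = i then eval_laurent G (f i) c else \<one>)"
    unfolding eval_laurent_vec_def by (rule finprod_cong') (auto simp: f eval_laurent_closed)
  moreover have "(\<Otimes>i\<in>I. if j = i then eval_laurent G (f i) c else \<one>) = \<one>" if "j \<notin> I"
    using that by (intro finprod_one_eqI) auto
  ultimately show ?thesis
    using assms by (simp add: finprod_singleton f eval_laurent_closed)
qed

end

end

section \<open>Commutator quotients\<close>

lemma (in group) comm_group_Mod_iff_derived_subset:
  assumes "H \<lhd> G"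
  shows "comm_group (G Mod H) \<longleftrightarrow> derived G (carrier G) \<subseteq> H"
proof
  assume "comm_group (G Mod H)"
  then show "derived G (carrier G) \<subseteq> H"
    by (rule derived_minimal[OF assms])
next
  assume derived: "derived G (carrier G) \<subseteq> H"
  interpret H: normal H G
    by (rule assms)
  interpret Q: group "G Mod H"
    by (rule H.factorgroup_is_group)
  show "comm_group (G Mod H)"
  proof (rule Q.group_comm_groupI)
    fix U V
    assume "U \<in> carrier (G Mod H)" "V \<in> carrier (G Mod H)"
    then obtain x y where x: "x \<in> carrier G" "U = H #> x" and y: "y \<in> carrier G" "V = H #> y"
      unfolding FactGroup_def RCOSETS_def by auto
    have "x \<otimes> y \<otimes> inv x \<otimes> inv y \<in> H"
      using derived x y unfolding derived_def by (blast intro: generate.incl)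
    moreover have "x \<otimes> y = (x \<otimes> y \<otimes> inv x \<otimes> inv y) \<otimes> (y \<otimes> x)"
      using x y by (simp add: m_assoc flip: m_assoc[of "inv y"])
    ultimately have "x \<otimes> y \<in> H #> (y \<otimes> x)"
      using x y by (metis H.subset m_closed rcosI)
    then have "H #> (x \<otimes> y) = H #> (y \<otimes> x)"
      using x y by (metis H.subgroup_axioms m_closed repr_independence)
    then show "U \<otimes>\<^bsub>G Mod H\<^esub> V = V \<otimes>\<^bsub>G Mod H\<^esub> U"
      using x y by (simp add: FactGroup_def H.rcos_sum)
  qed
qed

lemma (in normal) r_coset_image_subset_iff:
  assumes "A \<subseteq> carrier G" "K \<subseteq> carrier G"
  shows "(\<lambda>w. H #> w) ` A \<subseteq> (\<lambda>w. H #> w) ` K \<longleftrightarrow> A \<subseteq> H <#> K"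
proof -
  have "(\<exists>k \<in> K. H #> a = H #> k) \<longleftrightarrow> a \<in> H <#> K" if a: "a \<in> A" for a
  proof
    assume "\<exists>k \<in> K. H #> a = H #> k"
    then obtain k where "k \<in> K" "a \<in> H #> k"
      using a assms rcos_self[OF _ subgroup_axioms] by blast
    then show "a \<in> H <#> K"
      unfolding r_coset_def set_mult_def by blast
  next
    assume "a \<in> H <#> K"
    then obtain h k where "h \<in> H" "k \<in> K" "a = h \<otimes> k"
      unfolding set_mult_def by blast
    then show "\<exists>k \<in> K. H #> a = H #> k"
      using assms by (metis rcosI repr_independence subgroup_axioms subset subsetD)
  qed
  then show ?thesis
    by blast
qed

lemma (in group) derived_eq_set_mult_iff_comm_group_Mod:
  assumes N: "N \<lhd> G" and H: "H \<lhd> G"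
    and N_derived: "N \<subseteq> derived G (carrier G)" and H_derived: "H \<subseteq> derived G (carrier G)"
  shows "derived G (carrier G) = N <#> H
     \<longleftrightarrow> comm_group ((G Mod N) Mod ((\<lambda>w. N #> w) ` H))"
proof -
  interpret N: normal N G
    by (rule N)
  interpret H: normal H G
    by (rule H)
  interpret D: subgroup "derived G (carrier G)" G
    by (simp add: derived_is_subgroup)
  interpret Q: group "G Mod N"
    by (rule N.factorgroup_is_group)
  interpret p: group_hom G "G Mod N" "\<lambda>w. N #> w"
    by (simp add: group_hom_def group_hom_axioms_def is_group Q.is_group N.r_coset_hom_Mod)
  have surj: "(\<lambda>w. N #> w) ` carrier G = carrier (G Mod N)"
    by (auto simp: FactGroup_def RCOSETS_def)
  have "comm_group ((G Mod N) Mod ((\<lambda>w. N #> w) ` H))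
      \<longleftrightarrow> derived (G Mod N) (carrier (G Mod N)) \<subseteq> (\<lambda>w. N #> w) ` H"
    by (rule Q.comm_group_Mod_iff_derived_subset[OF H.surj_hom_normal_subgroup[OF p.group_hom_axioms surj]])
  also have "derived (G Mod N) (carrier (G Mod N)) = (\<lambda>w. N #> w) ` derived G (carrier G)"
    using p.derived_img[of "carrier G"] surj by simp
  also have "(\<lambda>w. N #> w) ` derived G (carrier G) \<subseteq> (\<lambda>w. N #> w) ` H
      \<longleftrightarrow> derived G (carrier G) \<subseteq> N <#> H"
    by (rule N.r_coset_image_subset_iff) (auto simp: H.subset)
  also have "\<dots> \<longleftrightarrow> derived G (carrier G) = N <#> H"
    using N_derived H_derived by (auto simp: set_mult_def)
  finally show ?thesis
    by blast
qed

lemma (in group) normal_closure_subset: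
  assumes "subgroup H G" and "\<And>g s. g \<in> carrier G \<Longrightarrow> s \<in> S \<Longrightarrow> g \<otimes> s \<otimes> inv g \<in> H"
  shows "normal_closure G S \<subseteq> H"
  unfolding normal_closure_def using assms by (intro generate_subgroup_incl) auto

lemma (in group) normal_closure_normal:
  assumes "S \<subseteq> carrier G"
  shows "normal_closure G S \<lhd> G"
  unfolding normal_closure_def
proof (rule normal_generateI)
  show "{g \<otimes> s \<otimes> inv g |g s. g \<in> carrier G \<and> s \<in> S} \<subseteq> carrier G"
    using assms by auto
next
  fix h x
  assume "h \<in> {g \<otimes> s \<otimes> inv g |g s. g \<in> carrier G \<and> s \<in> S}" and x: "x \<in> carrier G"
  then obtain g s where g: "g \<in> carrier G" and s: "s \<in> S" and h: "h = g \<otimes> s \<otimes> inv g"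
    by auto
  have "x \<otimes> h \<otimes> inv x = (x \<otimes> g) \<otimes> s \<otimes> inv (x \<otimes> g)"
    using g s x assms by (auto simp: h m_assoc inv_mult_group)
  then show "x \<otimes> h \<otimes> inv x \<in> {g \<otimes> s \<otimes> inv g |g s. g \<in> carrier G \<and> s \<in> S}"
    using g s x by blast
qed

lemma (in group) subset_normal_closure:
  assumes "S \<subseteq> carrier G"
  shows "S \<subseteq> normal_closure G S"
proof
  fix s
  assume s: "s \<in> S"
  then have "\<one> \<otimes> s \<otimes> inv \<one> \<in> normal_closure G S"
    unfolding normal_closure_def by (intro generate.incl) blast
  then show "s \<in> normal_closure G S"
    using s assms by auto
qed

section \<open>Fox calculus in the free group\<close>

locale free_group_of_rank =
  fixes n :: nat
begin

abbreviation F where "F \<equiv> free_group n"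

sublocale F: group F
  by (rule group_free_group)

lemma letter_in_carrier: "j < n \<Longrightarrow> [(b, j)] \<in> carrier F"
  by (simp add: carrier_free_group)

lemma inv_beta_word: "j < n \<Longrightarrow> inv\<^bsub>F\<^esub> [(True, j)] = [(False, j)]"
  by (rule F.inv_equality) (auto simp: letter_in_carrier mult_free_group reduce_def one_free_group)

lemma Cons_eq_mult:
  assumes "a # w \<in> carrier F"
  shows "a # w = [a] \<otimes>\<^bsub>F\<^esub> w"
  using assms reduced_ConsD[of a w] by (simp add: carrier_free_group mult_free_group reduce_reduced)

lemma exp_sum_mult: "exp_sum (u \<otimes>\<^bsub>F\<^esub> v) = exp_sum u + exp_sum v"
  by (simp add: mult_free_group exp_sum_reduce exp_sum_append)

lemma fox_phi_mult: "fox_phi i (u \<otimes>\<^bsub>F\<^esub> v) = fox_phi i u + tpow (exp_sum u) * fox_phi i v"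
  by (simp add: mult_free_group fox_phi_reduce fox_phi_append)

lemma exp_sum_one [simp]: "exp_sum \<one>\<^bsub>F\<^esub> = 0"
  by (simp add: one_free_group)

lemma fox_phi_one [simp]: "fox_phi i \<one>\<^bsub>F\<^esub> = 0"
  by (simp add: one_free_group)

lemma exp_sum_inv: "u \<in> carrier F \<Longrightarrow> exp_sum (inv\<^bsub>F\<^esub> u) = - exp_sum u"
  using exp_sum_mult[of "inv\<^bsub>F\<^esub> u" u] by simp

lemma fox_phi_inv:
  assumes "u \<in> carrier F"
  shows "fox_phi i (inv\<^bsub>F\<^esub> u) = - (tpow (- exp_sum u) * fox_phi i u)"
proof -
  have "fox_phi i (inv\<^bsub>F\<^esub> u) + tpow (- exp_sum u) * fox_phi i u = 0"
    using assms fox_phi_mult[of i "inv\<^bsub>F\<^esub> u" u] by (simp add: exp_sum_inv)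
  then show ?thesis
    unfolding eq_neg_iff_add_eq_0 .
qed

lemma exp_sum_int_pow:
  assumes x: "x \<in> carrier F"
  shows "exp_sum (x [^]\<^bsub>F\<^esub> (k::int)) = k * exp_sum x"
proof -
  have nat_pow: "exp_sum (x [^]\<^bsub>F\<^esub> (m::nat)) = int m * exp_sum x" for m
    by (induction m) (simp_all add: exp_sum_mult algebra_simps)
  show ?thesis
  proof (cases "k < 0")
    case True
    then have "x [^]\<^bsub>F\<^esub> k = inv\<^bsub>F\<^esub> (x [^]\<^bsub>F\<^esub> nat (- k))"
      unfolding int_pow_def2 by simp
    moreover have "exp_sum (inv\<^bsub>F\<^esub> (x [^]\<^bsub>F\<^esub> nat (- k))) = - (int (nat (- k)) * exp_sum x)"
      by (subst exp_sum_inv) (auto simp: x nat_pow)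
    ultimately show ?thesis
      using True by simp
  next
    case False
    then have "x [^]\<^bsub>F\<^esub> k = x [^]\<^bsub>F\<^esub> nat k"
      unfolding int_pow_def2 by simp
    moreover have "exp_sum (x [^]\<^bsub>F\<^esub> nat k) = int (nat k) * exp_sum x"
      by (rule nat_pow)
    ultimately show ?thesis
      using False by simp
  qed
qed

lemma fox_phi_commutator:
  assumes a: "a \<in> carrier F" and b: "b \<in> carrier F"
  shows "fox_phi i (a \<otimes>\<^bsub>F\<^esub> b \<otimes>\<^bsub>F\<^esub> inv\<^bsub>F\<^esub> a \<otimes>\<^bsub>F\<^esub> inv\<^bsub>F\<^esub> b)
     = (1 - tpow (exp_sum b)) * fox_phi i a + (tpow (exp_sum a) - 1) * fox_phi i b"
proof -
  let ?A = "exp_sum a" and ?B = "exp_sum b"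
  have "fox_phi i (a \<otimes>\<^bsub>F\<^esub> b \<otimes>\<^bsub>F\<^esub> inv\<^bsub>F\<^esub> a \<otimes>\<^bsub>F\<^esub> inv\<^bsub>F\<^esub> b)
      = fox_phi i a + tpow ?A * fox_phi i b + tpow (?A + ?B) * fox_phi i (inv\<^bsub>F\<^esub> a)
        + tpow (?A + ?B + exp_sum (inv\<^bsub>F\<^esub> a)) * fox_phi i (inv\<^bsub>F\<^esub> b)"
    by (simp only: fox_phi_mult exp_sum_mult)
  also have "\<dots> = fox_phi i a + tpow ?A * fox_phi i b - (tpow (?A + ?B) * tpow (- ?A)) * fox_phi i a
        - (tpow ?B * tpow (- ?B)) * fox_phi i b"
    using a b by (simp add: fox_phi_inv exp_sum_inv algebra_simps)
  also have "tpow (?A + ?B) * tpow (- ?A) = tpow ?B"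
    by (simp flip: tpow_add)
  finally show ?thesis
    by (simp add: tpow_mult_tpow_uminus algebra_simps)
qed

lemma fox_phi_conj:
  assumes "g \<in> carrier F" "r \<in> carrier F" "exp_sum r = 0"
  shows "fox_phi i (g \<otimes>\<^bsub>F\<^esub> r \<otimes>\<^bsub>F\<^esub> inv\<^bsub>F\<^esub> g) = tpow (exp_sum g) * fox_phi i r"
proof -
  have "fox_phi i (g \<otimes>\<^bsub>F\<^esub> r \<otimes>\<^bsub>F\<^esub> inv\<^bsub>F\<^esub> g) = fox_phi i g + tpow (exp_sum g) * fox_phi i r
      + tpow (exp_sum g + exp_sum r) * fox_phi i (inv\<^bsub>F\<^esub> g)"
    by (simp only: fox_phi_mult exp_sum_mult)
  also have "\<dots> = fox_phi i g + tpow (exp_sum g) * fox_phi i r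
      - (tpow (exp_sum g) * tpow (- exp_sum g)) * fox_phi i g"
    using assms by (simp add: fox_phi_inv)
  finally show ?thesis
    by (simp add: tpow_mult_tpow_uminus)
qed

lemma mem_ker_phi_iff: "w \<in> ker_phi n \<longleftrightarrow> w \<in> carrier F \<and> exp_sum w = 0"
  by (simp add: ker_phi_def)

lemma normal_ker_phi: "ker_phi n \<lhd> F"
proof -
  have "subgroup (ker_phi n) F"
  proof (rule F.subgroupI)
    have "[] \<in> ker_phi n"
      by (simp add: mem_ker_phi_iff carrier_free_group)
    then show "ker_phi n \<noteq> {}"
      by blast
  qed (auto simp: mem_ker_phi_iff exp_sum_mult exp_sum_inv)
  then show ?thesis
    by (auto simp: F.normal_inv_iff mem_ker_phi_iff exp_sum_mult exp_sum_inv)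
qed

lemma derived_ker_phi_normal: "derived F (ker_phi n) \<lhd> F"
  by (rule F.derived_is_normal[OF normal_ker_phi])

lemma derived_ker_phi_subset_derived: "derived F (ker_phi n) \<subseteq> derived F (carrier F)"
  by (rule F.mono_derived) (auto simp: ker_phi_def)

definition fox_vector :: "word \<Rightarrow> nat \<Rightarrow> laurent" where
  "fox_vector w = (\<lambda>i. if i < n then fox_phi i w else 0)"

lemma fox_vector_one: "fox_vector \<one>\<^bsub>F\<^esub> = (\<lambda>i. 0)"
  by (simp add: fox_vector_def one_free_group fun_eq_iff)

lemma fox_vector_mult:
  "exp_sum a = 0 \<Longrightarrow> fox_vector (a \<otimes>\<^bsub>F\<^esub> b) = (\<lambda>i. fox_vector a i + fox_vector b i)"
  by (simp add: fox_vector_def fox_phi_mult fun_eq_iff)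

lemma fox_vector_inv:
  "a \<in> carrier F \<Longrightarrow> exp_sum a = 0 \<Longrightarrow> fox_vector (inv\<^bsub>F\<^esub> a) = (\<lambda>i. - fox_vector a i)"
  by (simp add: fox_vector_def fox_phi_inv fun_eq_iff)

lemma fox_vector_conj:
  "g \<in> carrier F \<Longrightarrow> r \<in> carrier F \<Longrightarrow> exp_sum r = 0 \<Longrightarrow>
     fox_vector (g \<otimes>\<^bsub>F\<^esub> r \<otimes>\<^bsub>F\<^esub> inv\<^bsub>F\<^esub> g) = (\<lambda>i. tpow (exp_sum g) * fox_vector r i)"
  by (simp add: fox_vector_def fox_phi_conj fun_eq_iff)

lemma fox_vector_commutator_in_target_module:
  assumes a: "a \<in> carrier F" and b: "b \<in> carrier F"
  shows "fox_vector (a \<otimes>\<^bsub>F\<^esub> b \<otimes>\<^bsub>F\<^esub> inv\<^bsub>F\<^esub> a \<otimes>\<^bsub>F\<^esub> inv\<^bsub>F\<^esub> b) \<in> target_module n"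
proof -
  let ?A = "exp_sum a" and ?B = "exp_sum b"
  define y where "y i = geom_sum ?B * fox_phi i a - geom_sum ?A * fox_phi i b" for i
  have "(\<Sum>i<n. y i) = geom_sum ?B * (\<Sum>i<n. fox_phi i a) - geom_sum ?A * (\<Sum>i<n. fox_phi i b)"
    by (simp add: y_def sum_subtractf sum_distrib_left)
  also have "\<dots> = 0"
    using a b by (simp add: sum_fox_phi carrier_free_group)
  finally have "(\<Sum>i<n. y i) = 0" .
  moreover have "(1 - tpow 1) * y i = (1 - tpow ?B) * fox_phi i a + (tpow ?A - 1) * fox_phi i b" for i
  proof -
    have "(1 - tpow 1) * y i
        = ((1 - tpow 1) * geom_sum ?B) * fox_phi i a - ((1 - tpow 1) * geom_sum ?A) * fox_phi i b"
      by (simp add: y_def algebra_simps)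
    then show ?thesis
      unfolding one_minus_t_mult_geom_sum by (simp add: algebra_simps)
  qed
  ultimately show ?thesis
    unfolding target_module_iff
    by (intro exI[of _ y]) (simp add: fox_vector_def fox_phi_commutator[OF a b] fun_eq_iff)
qed

definition fox_preimage :: "(nat \<Rightarrow> laurent) set \<Rightarrow> word set" where
  "fox_preimage S = {w \<in> ker_phi n. fox_vector w \<in> S}"

context
  fixes S
  assumes S: "laurent_submodule S"
begin

lemma subgroup_fox_preimage: "subgroup (fox_preimage S) F"
proof (rule F.subgroupI)
  have "\<one>\<^bsub>F\<^esub> \<in> fox_preimage S"
    by (simp add: fox_preimage_def mem_ker_phi_iff fox_vector_one laurent_submodule_zero[OF S])
  then show "fox_preimage S \<noteq> {}"
    by blast
qed (auto simp: fox_preimage_def mem_ker_phi_iff exp_sum_mult exp_sum_inv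
       fox_vector_mult fox_vector_inv laurent_submodule_add[OF S] laurent_submodule_uminus[OF S])

lemma conj_in_fox_preimage:
  "g \<in> carrier F \<Longrightarrow> w \<in> fox_preimage S \<Longrightarrow> g \<otimes>\<^bsub>F\<^esub> w \<otimes>\<^bsub>F\<^esub> inv\<^bsub>F\<^esub> g \<in> fox_preimage S"
  by (auto simp: fox_preimage_def mem_ker_phi_iff exp_sum_mult exp_sum_inv fox_vector_conj
      laurent_submodule_tpow[OF S])

end

lemma derived_subset_fox_preimage_target_module:
  "derived F (carrier F) \<subseteq> fox_preimage (target_module n)"
  unfolding derived_def
  by (rule F.generate_subgroup_incl[OF _ subgroup_fox_preimage[OF laurent_submodule_target_module]])
     (auto simp: fox_preimage_def mem_ker_phi_iff exp_sum_mult exp_sum_inv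
       fox_vector_commutator_in_target_module)

lemma derived_ker_phi_subset_fox_preimage_zero:
  "derived F (ker_phi n) \<subseteq> fox_preimage {\<lambda>i. 0}"
proof -
  have zero: "laurent_submodule {\<lambda>i. 0 :: laurent}"
    by (rule laurent_submoduleI) auto
  show ?thesis
    unfolding derived_def
    by (rule F.generate_subgroup_incl[OF _ subgroup_fox_preimage[OF zero]])
       (auto simp: fox_preimage_def mem_ker_phi_iff exp_sum_mult exp_sum_inv fox_vector_def
         fox_phi_commutator)
qed

definition beta0_pow :: "int \<Rightarrow> word" where
  "beta0_pow k = [(True, 0)] [^]\<^bsub>F\<^esub> k"

lemma beta0_pow_closed: "0 < n \<Longrightarrow> beta0_pow k \<in> carrier F"
  by (simp add: beta0_pow_def letter_in_carrier)

lemma exp_sum_beta0_pow: "0 < n \<Longrightarrow> exp_sum (beta0_pow k) = k"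
  by (simp add: beta0_pow_def exp_sum_int_pow letter_in_carrier)

lemma beta0_pow_add: "0 < n \<Longrightarrow> beta0_pow (k + l) = beta0_pow k \<otimes>\<^bsub>F\<^esub> beta0_pow l"
  by (simp add: beta0_pow_def letter_in_carrier F.int_pow_mult)

lemma laurent_submodule_fox_vector_image:
  assumes H: "H \<lhd> F" and H_ker: "H \<subseteq> ker_phi n"
  shows "laurent_submodule (fox_vector ` H)"
proof -
  interpret H: normal H F
    by (rule H)
  have ker: "x \<in> carrier F \<and> exp_sum x = 0" if "x \<in> H" for x
    using H_ker that by (auto simp: mem_ker_phi_iff)
  show ?thesis
  proof (rule laurent_submoduleI)
    show "(\<lambda>i. 0) \<in> fox_vector ` H"
      using H.one_closed unfolding fox_vector_one[symmetric] by blast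
  next
    fix x y
    assume "x \<in> fox_vector ` H" "y \<in> fox_vector ` H"
    then obtain a b where "a \<in> H" "b \<in> H" "x = fox_vector a" "y = fox_vector b"
      by auto
    then have "a \<otimes>\<^bsub>F\<^esub> b \<in> H" "(\<lambda>i. x i + y i) = fox_vector (a \<otimes>\<^bsub>F\<^esub> b)"
      using ker by (simp_all add: fox_vector_mult)
    then show "(\<lambda>i. x i + y i) \<in> fox_vector ` H"
      by blast
  next
    fix x
    assume "x \<in> fox_vector ` H"
    then obtain a where "a \<in> H" "x = fox_vector a"
      by auto
    then have "inv\<^bsub>F\<^esub> a \<in> H" "(\<lambda>i. - x i) = fox_vector (inv\<^bsub>F\<^esub> a)"
      using ker by (simp_all add: fox_vector_inv)
    then show "(\<lambda>i. - x i) \<in> fox_vector ` H"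
      by blast
  next
    fix x k
    assume "x \<in> fox_vector ` H"
    then obtain a where a: "a \<in> H" "x = fox_vector a"
      by auto
    show "(\<lambda>i. tpow k * x i) \<in> fox_vector ` H"
    proof (cases "n = 0")
      case True
      then have "(\<lambda>i. tpow k * x i) = fox_vector a"
        unfolding a fox_vector_def by simp
      then show ?thesis
        using a by blast
    next
      case False
      then have "(\<lambda>i. tpow k * x i) = fox_vector (beta0_pow k \<otimes>\<^bsub>F\<^esub> a \<otimes>\<^bsub>F\<^esub> inv\<^bsub>F\<^esub> beta0_pow k)"
        using ker[OF a(1)] by (simp add: a fox_vector_conj beta0_pow_closed exp_sum_beta0_pow)
      moreover have "beta0_pow k \<otimes>\<^bsub>F\<^esub> a \<otimes>\<^bsub>F\<^esub> inv\<^bsub>F\<^esub> beta0_pow k \<in> H"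
        using False a by (simp add: H.inv_op_closed2 beta0_pow_closed)
      ultimately show ?thesis
        by blast
    qed
  qed
qed

lemma derived_subset_ker_phi: "derived F (carrier F) \<subseteq> ker_phi n"
  using derived_subset_fox_preimage_target_module by (auto simp: fox_preimage_def)

lemma fox_vector_commutator_letters:
  assumes "0 < n" "i < n"
  shows "fox_vector ([(True, 0)] \<otimes>\<^bsub>F\<^esub> [(True, i)] \<otimes>\<^bsub>F\<^esub> inv\<^bsub>F\<^esub> [(True, 0)] \<otimes>\<^bsub>F\<^esub> inv\<^bsub>F\<^esub> [(True, i)])
    = (\<lambda>l. if l < n then (1 - tpow 1) * ((if l = 0 then 1 else 0) - (if l = i then 1 else 0)) else 0)"
  using assms by (auto simp: fox_vector_def fox_phi_commutator letter_in_carrier fun_eq_iff algebra_simps)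

lemma fox_vector_image_derived: "fox_vector ` derived F (carrier F) = target_module n"
proof
  show "fox_vector ` derived F (carrier F) \<subseteq> target_module n"
    using derived_subset_fox_preimage_target_module by (auto simp: fox_preimage_def)
next
  let ?V = "fox_vector ` derived F (carrier F)"
  have V: "laurent_submodule ?V"
    by (rule laurent_submodule_fox_vector_image[OF F.derived_self_is_normal derived_subset_ker_phi])
  show "target_module n \<subseteq> ?V"
  proof
    fix x
    assume "x \<in> target_module n"
    then obtain y where y0: "(\<Sum>i<n. y i) = 0" and x: "x = (\<lambda>i. if i < n then (1 - tpow 1) * y i else 0)"
      unfolding target_module_iff by blast
    show "x \<in> ?V"
    proof (cases "n = 0")
      case True
      then have "x = fox_vector \<one>\<^bsub>F\<^esub>"
        unfolding fox_vector_one by (simp add: x)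
      then show ?thesis
        using F.subgroup_self F.derived_is_subgroup subgroup.one_closed by blast
    next
      case False
      define u where "u i = (\<lambda>l. if l < n then (1 - tpow 1) * ((if l = 0 then 1 else 0)
        - (if l = i then 1 else 0)) else (0::laurent))" for i
      text \<open>\<open>x = \<Sum>\<^sub>i\<^sub>\<ge>\<^sub>1 (-y\<^sub>i) u\<^sub>i\<close> with \<open>u\<^sub>i\<close> the Fox vector of \<open>[\<beta>\<^sub>0, \<beta>\<^sub>i]\<close>, using \<open>y\<^sub>0 = -\<Sum>\<^sub>i\<^sub>\<ge>\<^sub>1 y\<^sub>i\<close>.\<close>
      have "x = (\<lambda>l. \<Sum>i\<in>{1..<n}. (- y i) * u i l)"
      proof
        fix l
        consider "n \<le> l" | "l = 0" | "0 < l" "l < n"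
          by linarith
        then show "x l = (\<Sum>i\<in>{1..<n}. (- y i) * u i l)"
        proof cases
          case 1
          then show ?thesis
            by (simp add: x u_def)
        next
          case 2
          have "(\<Sum>i\<in>{1..<n}. (- y i) * u i l) = - ((1 - tpow 1) * (\<Sum>i\<in>{1..<n}. y i))"
            using False by (simp add: u_def 2 sum_negf sum_distrib_left mult.commute)
          also have "(\<Sum>i\<in>{1..<n}. y i) = - y 0"
            using y0 False by (simp add: lessThan_atLeast0 sum.atLeast_Suc_lessThan eq_neg_iff_add_eq_0 add.commute)
          finally show ?thesis
            using False by (simp add: x 2)
        next
          case 3
          have "(\<Sum>i\<in>{1..<n}. (- y i) * u i l) = (\<Sum>i\<in>{1..<n}. if i = l then (1 - tpow 1) * y l else 0)"
            using 3 by (intro sum.cong) (auto simp: u_def)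
          then show ?thesis
            using 3 by (simp add: x)
        qed
      qed
      also have "\<dots> \<in> ?V"
      proof (intro laurent_submodule_sum[OF V] laurent_submodule_smult[OF V])
        fix i
        assume "i \<in> {1..<n}"
        then have "u i = fox_vector ([(True, 0)] \<otimes>\<^bsub>F\<^esub> [(True, i)] \<otimes>\<^bsub>F\<^esub> inv\<^bsub>F\<^esub> [(True, 0)] \<otimes>\<^bsub>F\<^esub> inv\<^bsub>F\<^esub> [(True, i)])"
          using False by (simp add: u_def fox_vector_commutator_letters)
        moreover have "[(True, 0)] \<otimes>\<^bsub>F\<^esub> [(True, i)] \<otimes>\<^bsub>F\<^esub> inv\<^bsub>F\<^esub> [(True, 0)] \<otimes>\<^bsub>F\<^esub> inv\<^bsub>F\<^esub> [(True, i)]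
            \<in> derived F (carrier F)"
          using False \<open>i \<in> {1..<n}\<close> unfolding derived_def
          by (intro generate.incl) (auto intro!: letter_in_carrier)
        ultimately show "u i \<in> ?V"
          by blast
      qed simp
      finally show ?thesis .
    qed
  qed
qed

lemma normal_closure_subset_fox_preimage:
  assumes S: "laurent_submodule S" and A: "A \<subseteq> fox_preimage S"
  shows "normal_closure F A \<subseteq> fox_preimage S"
  using A by (intro F.normal_closure_subset subgroup_fox_preimage[OF S] conj_in_fox_preimage[OF S]) auto

lemma fox_vector_image_normal_closure:
  assumes R: "\<And>j. j < \<nu> \<Longrightarrow> R j \<in> ker_phi n"
  shows "fox_vector ` normal_closure F (R ` {..<\<nu>}) = fox_module n \<nu> R"
proof
  have "R ` {..<\<nu>} \<subseteq> fox_preimage (fox_module n \<nu> R)"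
    using R fox_module_generator by (auto simp: fox_preimage_def fox_vector_def)
  then have N: "normal_closure F (R ` {..<\<nu>}) \<subseteq> fox_preimage (fox_module n \<nu> R)"
    by (rule normal_closure_subset_fox_preimage[OF laurent_submodule_fox_module])
  then show "fox_vector ` normal_closure F (R ` {..<\<nu>}) \<subseteq> fox_module n \<nu> R"
    by (auto simp: fox_preimage_def)
  have R_carrier: "R ` {..<\<nu>} \<subseteq> carrier F"
    using R by (auto simp: mem_ker_phi_iff)
  have "laurent_submodule (fox_vector ` normal_closure F (R ` {..<\<nu>}))"
    using N by (intro laurent_submodule_fox_vector_image F.normal_closure_normal[OF R_carrier])
      (auto simp: fox_preimage_def)
  then show "fox_module n \<nu> R \<subseteq> fox_vector ` normal_closure F (R ` {..<\<nu>})"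
    using F.subset_normal_closure[OF R_carrier]
    by (intro fox_module_subset) (auto simp: fox_vector_def)
qed

subsection \<open>The Fox vector detects \<open>[ker \<phi>, ker \<phi>]\<close>\<close>

text \<open>For the transversal \<open>{\<beta>\<^sub>0\<^sup>k}\<close>, \<open>ker_shift s w = \<beta>\<^sub>0\<^sup>s w \<beta>\<^sub>0\<^sup>-\<^sup>s\<^sup>-\<^sup>\<phi>\<^sup>(\<^sup>w\<^sup>)\<close> lies in \<open>ker \<phi>\<close>,
  and the elements \<open>ker_shift k [\<beta>\<^sub>i]\<close> are the Reidemeister-Schreier generators of \<open>ker \<phi>\<close>.
  Sending \<open>t\<^sup>k e\<^sub>i\<close> to the class of \<open>ker_shift k [\<beta>\<^sub>i]\<close> in \<open>ker \<phi> / [ker \<phi>, ker \<phi>]\<close>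
  gives a left inverse of the Fox vector on \<open>ker \<phi>\<close>.\<close>

definition ker_shift :: "int \<Rightarrow> word \<Rightarrow> word" where
  "ker_shift s w = beta0_pow s \<otimes>\<^bsub>F\<^esub> w \<otimes>\<^bsub>F\<^esub> inv\<^bsub>F\<^esub> beta0_pow (s + exp_sum w)"

definition ker_quot :: "word set monoid" where
  "ker_quot = F\<lparr>carrier := ker_phi n\<rparr> Mod derived F (ker_phi n)"

definition ker_class :: "word \<Rightarrow> word set" where
  "ker_class w = derived F (ker_phi n) #>\<^bsub>F\<^esub> w"

definition generator_class :: "nat \<Rightarrow> int \<Rightarrow> word set" where
  "generator_class i k = ker_class (ker_shift k [(True, i)])"

definition vector_class :: "(nat \<Rightarrow> laurent) \<Rightarrow> word set" where
  "vector_class x = eval_laurent_vec ker_quot generator_class {0<..<n} x"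

lemma comm_group_ker_quot: "comm_group ker_quot"
  unfolding ker_quot_def
  by (rule F.derived_quot_of_subgroup_is_comm_group[OF normal_imp_subgroup[OF normal_ker_phi]])

sublocale Q: comm_group ker_quot
  by (rule comm_group_ker_quot)

lemma group_hom_ker_class: "group_hom (F\<lparr>carrier := ker_phi n\<rparr>) ker_quot ker_class"
proof -
  have K: "subgroup (ker_phi n) F"
    by (rule normal_imp_subgroup[OF normal_ker_phi])
  interpret K': normal "derived F (ker_phi n)" "F\<lparr>carrier := ker_phi n\<rparr>"
    by (rule F.derived_subgroup_is_normal[OF K])
  have "ker_class = (\<lambda>w. derived F (ker_phi n) #>\<^bsub>F\<lparr>carrier := ker_phi n\<rparr>\<^esub> w)"
    by (simp add: ker_class_def r_coset_def fun_eq_iff)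
  then show ?thesis
    using K'.r_coset_hom_Mod comm_group.axioms(2)[OF comm_group_ker_quot] F.subgroup_imp_group[OF K]
    by (simp add: group_hom_def group_hom_axioms_def ker_quot_def)
qed

lemma ker_class_mult:
  "x \<in> ker_phi n \<Longrightarrow> y \<in> ker_phi n \<Longrightarrow> ker_class (x \<otimes>\<^bsub>F\<^esub> y) = ker_class x \<otimes>\<^bsub>ker_quot\<^esub> ker_class y"
  using group_hom.hom_mult[OF group_hom_ker_class] by fastforce

lemma ker_class_inv: "x \<in> ker_phi n \<Longrightarrow> ker_class (inv\<^bsub>F\<^esub> x) = inv\<^bsub>ker_quot\<^esub> ker_class x"
  using group_hom.hom_inv[OF group_hom_ker_class, of x]
    F.m_inv_consistent[OF normal_imp_subgroup[OF normal_ker_phi]] by simp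

lemma ker_class_closed: "x \<in> ker_phi n \<Longrightarrow> ker_class x \<in> carrier ker_quot"
  using group_hom.hom_closed[OF group_hom_ker_class] by fastforce

lemma ker_class_one: "ker_class \<one>\<^bsub>F\<^esub> = \<one>\<^bsub>ker_quot\<^esub>"
  using group_hom.hom_one[OF group_hom_ker_class] by simp

lemma ker_class_eq_one_imp_mem_derived: "x \<in> ker_phi n \<Longrightarrow> ker_class x = \<one>\<^bsub>ker_quot\<^esub> \<Longrightarrow> x \<in> derived F (ker_phi n)"
  using F.rcos_self[OF _ F.derived_is_subgroup[of "ker_phi n"]]
  by (auto simp: ker_class_def ker_quot_def FactGroup_def mem_ker_phi_iff ker_phi_def)

context
  assumes rank_pos: "0 < n"
begin

lemma ker_shift_in_ker_phi: "w \<in> carrier F \<Longrightarrow> ker_shift s w \<in> ker_phi n"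
  by (simp add: ker_shift_def mem_ker_phi_iff exp_sum_mult exp_sum_inv beta0_pow_closed
      exp_sum_beta0_pow rank_pos)

lemma ker_shift_of_ker_phi: "w \<in> ker_phi n \<Longrightarrow> ker_shift 0 w = w"
  by (simp add: ker_shift_def mem_ker_phi_iff beta0_pow_def)

lemma ker_shift_one: "ker_shift s \<one>\<^bsub>F\<^esub> = \<one>\<^bsub>F\<^esub>"
  by (simp add: ker_shift_def beta0_pow_closed rank_pos)

lemma ker_shift_mult:
  assumes u: "u \<in> carrier F" and v: "v \<in> carrier F"
  shows "ker_shift s (u \<otimes>\<^bsub>F\<^esub> v) = ker_shift s u \<otimes>\<^bsub>F\<^esub> ker_shift (s + exp_sum u) v"
proof -
  have cancel: "inv\<^bsub>F\<^esub> x \<otimes>\<^bsub>F\<^esub> (x \<otimes>\<^bsub>F\<^esub> y) = y" if "x \<in> carrier F" "y \<in> carrier F" for x y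
    using that by (simp flip: F.m_assoc)
  show ?thesis
    using u v beta0_pow_closed[OF rank_pos]
    by (simp add: ker_shift_def exp_sum_mult F.m_assoc add.assoc cancel)
qed

lemma ker_shift_letter_0:
  "ker_shift s [(b, 0)] = \<one>\<^bsub>F\<^esub>"
proof -
  define e where "e = letter_exp (b, 0)"
  have letter: "[(b, 0)] = beta0_pow e"
  proof (cases b)
    case True
    then show ?thesis
      by (simp add: e_def beta0_pow_def letter_in_carrier rank_pos)
  next
    case False
    then show ?thesis
      by (simp add: e_def beta0_pow_def letter_in_carrier rank_pos F.int_pow_neg inv_beta_word)
  qed
  have "ker_shift s [(b, 0)] = beta0_pow (s + e) \<otimes>\<^bsub>F\<^esub> inv\<^bsub>F\<^esub> beta0_pow (s + e)"
    unfolding ker_shift_def letter by (simp add: exp_sum_beta0_pow beta0_pow_add rank_pos)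
  then show ?thesis
    by (simp add: beta0_pow_closed rank_pos)
qed

lemma ker_shift_inv_letter:
  assumes "j < n"
  shows "ker_shift s [(False, j)] = inv\<^bsub>F\<^esub> ker_shift (s - 1) [(True, j)]"
  using assms beta0_pow_closed[OF rank_pos] letter_in_carrier[OF assms]
  by (simp add: ker_shift_def F.inv_mult_group F.m_assoc inv_beta_word)

lemma generator_class_closed: "i \<in> {0<..<n} \<Longrightarrow> generator_class i k \<in> carrier ker_quot"
  unfolding generator_class_def by (intro ker_class_closed ker_shift_in_ker_phi letter_in_carrier) auto

lemma vector_class_cong: "(\<And>i. i \<in> {0<..<n} \<Longrightarrow> x i = y i) \<Longrightarrow> vector_class x = vector_class y"
  unfolding vector_class_def
  by (rule Q.eval_laurent_vec_cong[where f = generator_class, OF generator_class_closed])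

lemma vector_class_add: "vector_class (\<lambda>i. x i + y i) = vector_class x \<otimes>\<^bsub>ker_quot\<^esub> vector_class y"
  unfolding vector_class_def
  by (rule Q.eval_laurent_vec_add[where f = generator_class, OF generator_class_closed])

lemma vector_class_single:
  assumes "j \<in> {0<..<n}"
  shows "vector_class (\<lambda>i. if i = j then c else 0) = eval_laurent ker_quot (generator_class j) c"
proof -
  have "vector_class (\<lambda>i. if i = j then c else 0)
      = (if j \<in> {0<..<n} then eval_laurent ker_quot (generator_class j) c else \<one>\<^bsub>ker_quot\<^esub>)"
    unfolding vector_class_def
    by (rule Q.eval_laurent_vec_single[where f = generator_class, OF generator_class_closed]) auto
  with assms show ?thesis
    by simp
qed

lemma vector_class_letter:
  assumes j: "j < n"
  shows "vector_class (\<lambda>i. tpow s * fox_phi i [(b, j)]) = ker_class (ker_shift s [(b, j)])"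
proof -
  let ?c = "if b then tpow s else - tpow (s - 1)"
  have "vector_class (\<lambda>i. tpow s * fox_phi i [(b, j)]) = vector_class (\<lambda>i. if i = j then ?c else 0)"
    by (rule vector_class_cong) (auto simp flip: tpow_add)
  also have "\<dots> = ker_class (ker_shift s [(b, j)])"
  proof (cases "j = 0")
    case True
    then have "vector_class (\<lambda>i. if i = j then ?c else 0) = vector_class (\<lambda>i. 0)"
      by (intro vector_class_cong) auto
    then show ?thesis
      by (simp add: vector_class_def Q.eval_laurent_vec_zero True ker_shift_letter_0 ker_class_one)
  next
    case False
    then have "j \<in> {0<..<n}"
      using j by simp
    moreover have "generator_class j k \<in> carrier ker_quot" for k
      using \<open>j \<in> {0<..<n}\<close> by (rule generator_class_closed)
    ultimately show ?thesis
      using ker_shift_in_ker_phi[OF letter_in_carrier[OF j]]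
      by (cases b) (simp_all add: vector_class_single Q.eval_laurent_tpow Q.eval_laurent_uminus
          generator_class_def ker_shift_inv_letter ker_class_inv)
  qed
  finally show ?thesis .
qed

lemma vector_class_fox_phi:
  "v \<in> carrier F \<Longrightarrow> vector_class (\<lambda>i. tpow s * fox_phi i v) = ker_class (ker_shift s v)"
proof (induction v arbitrary: s)
  case Nil
  show ?case
    using ker_shift_one ker_class_one
    by (simp add: vector_class_def Q.eval_laurent_vec_zero one_free_group)
next
  case (Cons a v)
  obtain b j where a: "a = (b, j)"
    by (cases a)
  have j: "j < n" and v: "v \<in> carrier F"
    using Cons.prems reduced_ConsD[of a v] by (auto simp: a carrier_free_group)
  have av: "a # v = [a] \<otimes>\<^bsub>F\<^esub> v"
    by (rule Cons_eq_mult[OF Cons.prems])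
  have "(\<lambda>i. tpow s * fox_phi i (a # v))
      = (\<lambda>i. tpow s * fox_phi i [a] + tpow (s + exp_sum [a]) * fox_phi i v)"
    unfolding av by (simp add: fox_phi_mult tpow_add algebra_simps)
  then have "vector_class (\<lambda>i. tpow s * fox_phi i (a # v))
      = vector_class (\<lambda>i. tpow s * fox_phi i [a])
        \<otimes>\<^bsub>ker_quot\<^esub> vector_class (\<lambda>i. tpow (s + exp_sum [a]) * fox_phi i v)"
    by (simp only: vector_class_add)
  also have "\<dots> = ker_class (ker_shift s [a]) \<otimes>\<^bsub>ker_quot\<^esub> ker_class (ker_shift (s + exp_sum [a]) v)"
    using vector_class_letter[OF j, of s b] Cons.IH[OF v] by (simp only: a)
  also have "\<dots> = ker_class (ker_shift s (a # v))"
    unfolding av using j v by (simp add: a ker_shift_mult ker_class_mult ker_shift_in_ker_phi letter_in_carrier)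
  finally show ?case .
qed

end

lemma fox_vector_eq_zero_imp_mem_derived:
  assumes w: "w \<in> ker_phi n" and zero: "fox_vector w = (\<lambda>i. 0)"
  shows "w \<in> derived F (ker_phi n)"
proof (cases "n = 0")
  case True
  have "\<forall>a \<in> set w. snd a < n"
    using w by (simp add: mem_ker_phi_iff carrier_free_group)
  then have "w = \<one>\<^bsub>F\<^esub>"
    using True by (cases w) (auto simp: one_free_group)
  then show ?thesis
    using F.derived_is_subgroup[of "ker_phi n"] subgroup.one_closed
    by (metis mem_ker_phi_iff subsetI)
next
  case False
  have w_carrier: "w \<in> carrier F"
    using w by (simp add: mem_ker_phi_iff)
  have pos: "0 < n"
    using False by simp
  have "ker_class w = vector_class (\<lambda>i. fox_phi i w)"
    using vector_class_fox_phi[OF pos w_carrier, of 0] ker_shift_of_ker_phi[OF pos w] by simp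
  also have "\<dots> = vector_class (\<lambda>i. 0)"
  proof (rule vector_class_cong[OF pos])
    fix i :: nat
    assume "i \<in> {0<..<n}"
    then show "fox_phi i w = 0"
      using fun_cong[OF zero, of i] by (simp add: fox_vector_def)
  qed
  also have "\<dots> = \<one>\<^bsub>ker_quot\<^esub>"
    by (simp add: vector_class_def Q.eval_laurent_vec_zero)
  finally show ?thesis
    by (rule ker_class_eq_one_imp_mem_derived[OF w])
qed

lemma derived_eq_set_mult_derived_ker_phi_iff:
  assumes M: "M \<lhd> F" and M_derived: "M \<subseteq> derived F (carrier F)"
  shows "derived F (carrier F) = M <#>\<^bsub>F\<^esub> derived F (ker_phi n)
     \<longleftrightarrow> fox_vector ` derived F (carrier F) \<subseteq> fox_vector ` M"
proof
  have ker: "x \<in> carrier F \<and> exp_sum x = 0" if "x \<in> M" for x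
    using that M_derived derived_subset_ker_phi by (auto simp: mem_ker_phi_iff)
  assume eq: "derived F (carrier F) = M <#>\<^bsub>F\<^esub> derived F (ker_phi n)"
  show "fox_vector ` derived F (carrier F) \<subseteq> fox_vector ` M"
  proof
    fix x
    assume "x \<in> fox_vector ` derived F (carrier F)"
    then obtain m k where m: "m \<in> M" and k: "k \<in> derived F (ker_phi n)"
      and x: "x = fox_vector (m \<otimes>\<^bsub>F\<^esub> k)"
      unfolding eq set_mult_def by auto
    have "fox_vector k = (\<lambda>i. 0)"
      using k derived_ker_phi_subset_fox_preimage_zero by (auto simp: fox_preimage_def)
    then have "x = fox_vector m"
      using ker[OF m] by (simp add: x fox_vector_mult)
    then show "x \<in> fox_vector ` M"
      using m by blast
  qed
next
  have ker: "x \<in> carrier F \<and> exp_sum x = 0" if "x \<in> M" for x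
    using that M_derived derived_subset_ker_phi by (auto simp: mem_ker_phi_iff)
  assume images: "fox_vector ` derived F (carrier F) \<subseteq> fox_vector ` M"
  interpret D: subgroup "derived F (carrier F)" F
    by (simp add: F.derived_is_subgroup)
  show "derived F (carrier F) = M <#>\<^bsub>F\<^esub> derived F (ker_phi n)"
  proof
    show "derived F (carrier F) \<subseteq> M <#>\<^bsub>F\<^esub> derived F (ker_phi n)"
    proof
      fix w
      assume w_derived: "w \<in> derived F (carrier F)"
      then have w: "w \<in> ker_phi n"
        using derived_subset_ker_phi by blast
      obtain m where m: "m \<in> M" and fox_m: "fox_vector m = fox_vector w"
        using images w_derived by (metis image_iff subsetD)
      define k where "k = inv\<^bsub>F\<^esub> m \<otimes>\<^bsub>F\<^esub> w"
      have k: "k \<in> ker_phi n"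
        using ker[OF m] w by (simp add: k_def mem_ker_phi_iff exp_sum_mult exp_sum_inv)
      have "fox_vector k = (\<lambda>i. 0)"
        using ker[OF m] fox_m by (simp add: k_def exp_sum_inv fox_vector_mult fox_vector_inv)
      then have "k \<in> derived F (ker_phi n)"
        by (rule fox_vector_eq_zero_imp_mem_derived[OF k])
      moreover have "w = m \<otimes>\<^bsub>F\<^esub> k"
        using ker[OF m] w by (simp add: k_def mem_ker_phi_iff flip: F.m_assoc)
      ultimately show "w \<in> M <#>\<^bsub>F\<^esub> derived F (ker_phi n)"
        using m unfolding set_mult_def by blast
    qed
    show "M <#>\<^bsub>F\<^esub> derived F (ker_phi n) \<subseteq> derived F (carrier F)"
      using M_derived derived_ker_phi_subset_derived by (auto simp: set_mult_def)
  qed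
qed

end

theorem theorem7p1:
  fixes n \<nu> :: nat and R :: "nat \<Rightarrow> word"
  defines "F \<equiv> free_group n"
  defines "K \<equiv> ker_phi n"
  defines "N \<equiv> normal_closure F (R ` {..<\<nu>})"
  assumes rel_in_F: "\<And>j. j < \<nu> \<Longrightarrow> R j \<in> carrier F"
    and rel_comm: "\<And>j. j < \<nu> \<Longrightarrow> R j \<in> derived F (carrier F)"
  shows "(fox_module n \<nu> R = target_module n
            \<longleftrightarrow> derived F (carrier F) = N <#>\<^bsub>F\<^esub> derived F K)
       \<and> (derived F (carrier F) = N <#>\<^bsub>F\<^esub> derived F K
            \<longleftrightarrow> comm_group ((F Mod N) Mod ((\<lambda>w. N #>\<^bsub>F\<^esub> w) ` derived F K)))"
proof -
  interpret free_group_of_rank n .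
  have N_normal: "N \<lhd> F"
    unfolding N_def F_def using rel_in_F by (intro F.normal_closure_normal) (auto simp: F_def)
  have N_derived: "N \<subseteq> derived F (carrier F)"
    unfolding N_def F_def using rel_comm
    by (intro F.normal_closure_subset F.derived_is_subgroup F.derived_self_is_normal[THEN normal.inv_op_closed2])
      (auto simp: F_def)
  have fox_N: "fox_vector ` N = fox_module n \<nu> R"
    unfolding N_def F_def
    using rel_comm derived_subset_ker_phi by (intro fox_vector_image_normal_closure) (auto simp: F_def)
  have "fox_module n \<nu> R \<subseteq> target_module n"
    using N_derived fox_vector_image_derived fox_N by (metis F_def image_mono)
  then have "fox_module n \<nu> R = target_module n \<longleftrightarrow> target_module n \<subseteq> fox_module n \<nu> R"
    by blast
  also have "\<dots> \<longleftrightarrow> derived F (carrier F) = N <#>\<^bsub>F\<^esub> derived F K"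
    using derived_eq_set_mult_derived_ker_phi_iff[OF N_normal[unfolded F_def] N_derived[unfolded F_def]]
      fox_N fox_vector_image_derived
    by (simp add: F_def K_def)
  finally show ?thesis
    using F.derived_eq_set_mult_iff_comm_group_Mod[OF N_normal[unfolded F_def] derived_ker_phi_normal
        N_derived[unfolded F_def] derived_ker_phi_subset_derived]
    by (simp add: F_def K_def)
qed

end
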